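(* Let $u,v$ be sufficiently large positive real numbers such that $v^{9/10}\le u\le2v$. Let $t>1$ be a real number that is not an integer expressible as a sum of two squares, such that $|u-t|\le v^{1/3}$. Then \[ \sum_{m:\,|m-u|>v^{1/2}}r(m)\Big(\frac1{m-t}-\frac{m}{m^2+1}\Big)=-\pi\log t+O(1). \]
   Context: $r(m)=\#\{(a,b)\in\mathbb Z^2:a^2+b^2=m\}$; the sum is over integers $m\ge1$. *)

theory Defs
  imports "HOL-Analysis.Analysis"
begin

definition r2 :: "nat \<Rightarrow> nat" where
  "r2 m = card {p :: int \<times> int. (fst p)^2 + (snd p)^2 = int m}"

end

(*
  Write r(m) = pi + (r(m) - pi).  Counting lattice points column by column and comparing with
  the area of a quarter disc gives the Gauss bound |#{a^2 + b^2 <= n} - pi n| <= 4 sqrt n + 1,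
  so the partial sums of r(m) - pi are O(sqrt n).  Partial summation then bounds the
  contribution of r(m) - pi against the kernel 1/(m - t) - m/(m^2 + 1) by O(1): the excluded
  window around t has half-width w = sqrt v >= sqrt (t/3), so sqrt m / |m - t| = O(1) at its
  edges, and beyond them sqrt m times the variation of 1/(m - t) telescopes against
  1/sqrt (m - t).  For the constant part pi, the sums of 1/(m - t) and of m/(m^2 + 1) are
  compared with logarithms; as both edges of the window are at distance about w from t,
  everything cancels up to O(1) except -log t.  Finally, the terms with m > t are nonnegative,
  so the bound on the partial sums yields both the existence of the infinite sum and the same
  bound for it.
*)

theory Submission
  imports Defs "HOL-Real_Asymp.Real_Asymp"
begin

lemma sqrt_of_nat_le: "sqrt (real n) \<le> real n"
proof (cases "n = 0")
  case False
  then have "sqrt (real n) * 1 \<le> sqrt (real n) * sqrt (real n)"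
    by (intro mult_left_mono) auto
  then show ?thesis
    by simp
qed simp

lemma ln_diff_le_of_le_mult:
  fixes x y c :: real
  assumes "0 < x" and "0 < y" and "x \<le> c * y"
  shows "ln x - ln y \<le> c - 1"
proof -
  have "ln x - ln y \<le> (x - y) / y"
    using assms(1,2) by (rule ln_diff_le)
  also have "\<dots> \<le> c - 1"
    using assms(2,3) by (simp add: divide_simps left_diff_distrib)
  finally show ?thesis .
qed

lemma sum_le_telescope:
  fixes x h :: "nat \<Rightarrow> real"
  assumes "p \<le> q" and "\<And>m. p \<le> m \<Longrightarrow> m < q \<Longrightarrow> x m \<le> h (Suc m) - h m"
  shows "(\<Sum>m\<in>{p..<q}. x m) \<le> h q - h p"
  using sum_mono[of "{p..<q}" x "\<lambda>m. h (Suc m) - h m"] assms by (simp add: sum_Suc_diff')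

lemma telescope_le_sum:
  fixes x h :: "nat \<Rightarrow> real"
  assumes "p \<le> q" and "\<And>m. p \<le> m \<Longrightarrow> m < q \<Longrightarrow> h (Suc m) - h m \<le> x m"
  shows "h q - h p \<le> (\<Sum>m\<in>{p..<q}. x m)"
  using sum_mono[of "{p..<q}" "\<lambda>m. h (Suc m) - h m" x] assms by (simp add: sum_Suc_diff')

section \<open>Lattice points in a disc\<close>

lemma abs_le_power2_int: "\<bar>a\<bar> \<le> (a :: int)\<^sup>2"
proof (cases "a = 0")
  case False
  then have "\<bar>a\<bar> * 1 \<le> \<bar>a\<bar> * \<bar>a\<bar>"
    by (intro mult_left_mono) auto
  then show ?thesis
    by (simp add: power2_eq_square abs_mult_self_eq)
qed simp

lemma int_power2_le_subset: "{b::int. b\<^sup>2 \<le> X} \<subseteq> {-X..X}"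
proof -
  have "-X \<le> b \<and> b \<le> X" if "b\<^sup>2 \<le> X" for b
    using that abs_le_power2_int[of b] unfolding abs_le_iff by linarith
  then show ?thesis
    by auto
qed

lemma finite_int_power2_le: "finite {b::int. b\<^sup>2 \<le> X}"
  using int_power2_le_subset by (rule finite_subset) simp

lemma card_int_power2_le:
  fixes X :: int
  assumes "0 \<le> X"
  shows "card {b::int. b\<^sup>2 \<le> X} = 2 * nat \<lfloor>sqrt (of_int X)\<rfloor> + 1"
proof -
  define k where "k = \<lfloor>sqrt (of_int X)\<rfloor>"
  have "b\<^sup>2 \<le> X \<longleftrightarrow> -k \<le> b \<and> b \<le> k" for b :: int
  proof -
    have "b\<^sup>2 \<le> X \<longleftrightarrow> sqrt (of_int (b\<^sup>2)) \<le> sqrt (of_int X)"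
      by (simp only: real_sqrt_le_iff of_int_le_iff)
    also have "\<dots> \<longleftrightarrow> \<bar>b\<bar> \<le> k"
      by (simp add: k_def le_floor_iff)
    finally show ?thesis
      by (simp only: abs_le_iff) linarith
  qed
  then have "{b::int. b\<^sup>2 \<le> X} = {-k..k}"
    by (simp add: set_eq_iff)
  moreover have "0 \<le> k"
    using assms by (simp add: k_def)
  ultimately show ?thesis
    by (simp add: k_def[symmetric] nat_add_distrib nat_mult_distrib)
qed

lemma card_int_power2_le_approx:
  fixes X :: int
  shows "\<bar>real (card {b::int. b\<^sup>2 \<le> X}) - 2 * sqrt (max 0 (of_int X))\<bar> \<le> of_bool (0 \<le> X)"
proof (cases "0 \<le> X")
  case True
  define s where "s = sqrt (of_int X)"
  have "real (card {b::int. b\<^sup>2 \<le> X}) = 2 * real_of_int \<lfloor>s\<rfloor> + 1"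
    using card_int_power2_le[OF True] True by (simp add: s_def)
  moreover have "\<bar>2 * real_of_int \<lfloor>s\<rfloor> + 1 - 2 * s\<bar> \<le> 1"
    unfolding abs_le_iff by linarith
  ultimately show ?thesis
    using True by (simp add: s_def)
next
  case False
  then have "\<not> b\<^sup>2 \<le> X" for b :: int
    using zero_le_power2[of b] by linarith
  then have "{b::int. b\<^sup>2 \<le> X} = {}"
    by simp
  then show ?thesis
    using False by simp
qed

definition lattice_disc :: "nat \<Rightarrow> (int \<times> int) set" where
  "lattice_disc n = {p. (fst p)\<^sup>2 + (snd p)\<^sup>2 \<le> int n}"

lemma lattice_disc_eq_Sigma:
  "lattice_disc n = (SIGMA a:{-int n..int n}. {b. b\<^sup>2 \<le> int n - a\<^sup>2})"
proof -
  have "-int n \<le> a \<and> a \<le> int n" if "a\<^sup>2 + b\<^sup>2 \<le> int n" for a b :: int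
    using that abs_le_power2_int[of a] zero_le_power2[of b] unfolding abs_le_iff by linarith
  then show ?thesis
    by (auto simp: lattice_disc_def)
qed

lemma finite_lattice_disc: "finite (lattice_disc n)"
  unfolding lattice_disc_eq_Sigma by (simp add: finite_int_power2_le)

lemma card_lattice_disc_eq_sum_fibers:
  "card (lattice_disc n) = (\<Sum>a\<in>{-int n..int n}. card {b. b\<^sup>2 \<le> int n - a\<^sup>2})"
  unfolding lattice_disc_eq_Sigma by (simp add: finite_int_power2_le)

lemma r2_0: "r2 0 = 1"
proof -
  have "{p :: int \<times> int. (fst p)\<^sup>2 + (snd p)\<^sup>2 = 0} = {(0, 0)}"
    by auto
  then show ?thesis
    by (simp add: r2_def)
qed

lemma sum_r2_eq_card_lattice_disc: "(\<Sum>m\<le>n. r2 m) = card (lattice_disc n)"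
proof (induction n)
  case 0
  have "lattice_disc 0 = {(0, 0)}"
    by (auto simp: lattice_disc_def sum_power2_le_zero_iff)
  then show ?case
    by (simp add: r2_0)
next
  case (Suc n)
  define level where "level = {p :: int \<times> int. (fst p)\<^sup>2 + (snd p)\<^sup>2 = int (Suc n)}"
  have "lattice_disc (Suc n) = lattice_disc n \<union> level"
    by (auto simp: lattice_disc_def level_def)
  moreover have "finite level"
    by (rule finite_subset[OF _ finite_lattice_disc[of "Suc n"]]) (auto simp: lattice_disc_def level_def)
  moreover have "lattice_disc n \<inter> level = {}"
    by (auto simp: lattice_disc_def level_def)
  ultimately have "card (lattice_disc (Suc n)) = card (lattice_disc n) + card level"
    by (simp add: card_Un_disjoint finite_lattice_disc)
  then show ?case
    using Suc by (simp add: r2_def level_def)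
qed

lemma sum_symmetric_int:
  fixes f :: "int \<Rightarrow> 'a::comm_ring_1"
  shows "(\<Sum>a\<in>{-int n..int n}. f \<bar>a\<bar>) = 2 * (\<Sum>j\<le>n. f (int j)) - f 0"
proof (induction n)
  case (Suc n)
  have "{-int (Suc n)..int (Suc n)} = insert (-int (Suc n)) (insert (int (Suc n)) {-int n..int n})"
    by auto
  then show ?case
    using Suc by (simp add: algebra_simps)
qed simp

lemma has_real_derivative_circle_primitive:
  fixes r x :: real
  assumes "\<bar>x\<bar> < r"
  shows "((\<lambda>x. (x * sqrt (r\<^sup>2 - x\<^sup>2) + r\<^sup>2 * arcsin (x / r)) / 2) has_real_derivative sqrt (r\<^sup>2 - x\<^sup>2)) (at x)"
proof -
  define s where "s = sqrt (r\<^sup>2 - x\<^sup>2)"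
  have r: "0 < r"
    using assms by linarith
  have pos: "0 < r\<^sup>2 - x\<^sup>2"
    using power_strict_mono[OF assms abs_ge_zero, of 2] by simp
  then have s: "0 < s" "s\<^sup>2 = r\<^sup>2 - x\<^sup>2"
    by (simp_all add: s_def)
  have x_r: "-1 < x / r" "x / r < 1"
    using assms r by (auto simp: abs_less_iff field_simps)
  have "((\<lambda>x. r\<^sup>2 - x\<^sup>2) has_real_derivative - (2 * x)) (at x)"
    by (auto intro!: derivative_eq_intros)
  from DERIV_chain2[OF DERIV_real_sqrt this] pos
  have sqrt: "((\<lambda>x. sqrt (r\<^sup>2 - x\<^sup>2)) has_real_derivative - x / s) (at x)"
    by (simp add: s_def field_simps)
  have "((\<lambda>x. x / r) has_real_derivative 1 / r) (at x)"
    using r by (auto intro!: derivative_eq_intros)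
  moreover have "sqrt (1 - (x / r)\<^sup>2) = s / r"
    using r by (simp add: s_def field_simps real_sqrt_divide)
  ultimately have arcsin: "((\<lambda>x. arcsin (x / r)) has_real_derivative 1 / s) (at x)"
    using DERIV_chain2[OF DERIV_arcsin] x_r r by fastforce
  have "((\<lambda>x. (x * sqrt (r\<^sup>2 - x\<^sup>2) + r\<^sup>2 * arcsin (x / r)) / 2) has_real_derivative
          (x * (- x / s) + 1 * sqrt (r\<^sup>2 - x\<^sup>2) + r\<^sup>2 * (1 / s)) / 2) (at x)"
    by (intro DERIV_cdivide DERIV_add DERIV_mult' DERIV_ident DERIV_cmult sqrt arcsin)
  moreover have "(x * (- x / s) + 1 * sqrt (r\<^sup>2 - x\<^sup>2) + r\<^sup>2 * (1 / s)) / 2 = s"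
    unfolding s_def[symmetric] using s by (simp add: field_simps power2_eq_square)
  ultimately show ?thesis
    unfolding s_def by (rule DERIV_cong)
qed

lemma has_integral_quarter_circle:
  fixes r :: real
  assumes "0 \<le> r"
  shows "((\<lambda>x. sqrt (r\<^sup>2 - x\<^sup>2)) has_integral pi * r\<^sup>2 / 4) {0..r}"
proof (cases "r = 0")
  case False
  define F where "F = (\<lambda>x. (x * sqrt (r\<^sup>2 - x\<^sup>2) + r\<^sup>2 * arcsin (x / r)) / 2)"
  have "continuous_on {0..r} F"
    unfolding F_def using assms False by (intro continuous_intros) (auto simp: divide_simps)
  moreover have "(F has_vector_derivative sqrt (r\<^sup>2 - x\<^sup>2)) (at x)" if "x \<in> {0<..<r}" for x
    using has_real_derivative_circle_primitive[of x r] that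
    by (simp add: F_def has_real_derivative_iff_has_vector_derivative)
  ultimately have "((\<lambda>x. sqrt (r\<^sup>2 - x\<^sup>2)) has_integral F r - F 0) {0..r}"
    using assms by (intro fundamental_theorem_of_calculus_interior) auto
  moreover have "F r - F 0 = pi * r\<^sup>2 / 4"
    using False by (simp add: F_def)
  ultimately show ?thesis
    by simp
qed (simp add: has_integral_refl)

context antimono_fun_sum_integral_diff
begin

lemma integral_le_sum: "integral {0..real n} f \<le> (\<Sum>k\<le>n. f (real k))"
  using sum_integral_diff_series_nonneg[of n] by (simp add: sum_integral_diff_series_def)

lemma sum_le_integral_add_first: "(\<Sum>k\<le>n. f (real k)) \<le> integral {0..real n} f + f 0"
  using sum_integral_diff_series_antimono[of 0 n] by (simp add: sum_integral_diff_series_def)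

end

text \<open>The \<open>max 0\<close> matters: for negative \<open>x\<close>, \<open>sqrt x = - sqrt (- x)\<close> in Isabelle, not \<open>0\<close>.\<close>
definition half_chord :: "nat \<Rightarrow> real \<Rightarrow> real" where
  "half_chord n x = sqrt (max 0 (real n - x\<^sup>2))"

lemma antimono_half_chord: "antimono_fun_sum_integral_diff (half_chord n)"
proof
  fix x y :: real
  assume "0 \<le> x" "x \<le> y"
  then have "x\<^sup>2 \<le> y\<^sup>2"
    by (intro power_mono)
  then show "half_chord n y \<le> half_chord n x"
    unfolding half_chord_def by (intro real_sqrt_le_mono max.mono) auto
qed (auto simp: half_chord_def intro!: continuous_intros)

lemma integral_half_chord: "integral {0..real n} (half_chord n) = pi * real n / 4"
proof -
  define r where "r = sqrt (real n)"
  have r: "0 \<le> r" "r\<^sup>2 = real n"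
    by (simp_all add: r_def)
  have inside: "half_chord n x = sqrt (r\<^sup>2 - x\<^sup>2)" if "x \<in> {0..r}" for x
    using power_mono[of x r 2] that r by (simp add: half_chord_def)
  have outside: "half_chord n x = 0" if "x \<in> {r..real n}" for x
    using power_mono[of r x 2] that r by (simp add: half_chord_def)
  have "(half_chord n has_integral pi * r\<^sup>2 / 4) {0..r}"
    by (rule has_integral_eq[OF _ has_integral_quarter_circle[OF r(1)]]) (simp add: inside)
  moreover have "(half_chord n has_integral 0) {r..real n}"
    by (rule has_integral_eq[OF _ has_integral_0]) (simp add: outside)
  ultimately have "(half_chord n has_integral pi * r\<^sup>2 / 4 + 0) {0..real n}"
    using r(1) sqrt_of_nat_le[of n] by (intro has_integral_combine) (simp_all add: r_def)
  then show ?thesis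
    using r(2) by (simp add: integral_unique)
qed

lemma card_lattice_disc_approx_chords:
  "\<bar>real (card (lattice_disc n)) - 2 * (\<Sum>a\<in>{-int n..int n}. half_chord n \<bar>of_int a\<bar>)\<bar>
     \<le> 2 * sqrt (real n) + 1"
proof -
  have "\<bar>real (card (lattice_disc n)) - 2 * (\<Sum>a\<in>{-int n..int n}. half_chord n \<bar>of_int a\<bar>)\<bar>
      = \<bar>\<Sum>a\<in>{-int n..int n}. real (card {b. b\<^sup>2 \<le> int n - a\<^sup>2}) - 2 * half_chord n \<bar>of_int a\<bar>\<bar>"
    by (simp add: card_lattice_disc_eq_sum_fibers sum_subtractf sum_distrib_left)
  also have "\<dots> \<le> (\<Sum>a\<in>{-int n..int n}. \<bar>real (card {b. b\<^sup>2 \<le> int n - a\<^sup>2}) - 2 * half_chord n \<bar>of_int a\<bar>\<bar>)"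
    by (rule sum_abs)
  also have "\<dots> \<le> (\<Sum>a\<in>{-int n..int n}. of_bool (a\<^sup>2 \<le> int n))"
  proof (intro sum_mono)
    fix a :: int
    show "\<bar>real (card {b. b\<^sup>2 \<le> int n - a\<^sup>2}) - 2 * half_chord n \<bar>of_int a\<bar>\<bar> \<le> of_bool (a\<^sup>2 \<le> int n)"
      using card_int_power2_le_approx[of "int n - a\<^sup>2"] by (simp add: half_chord_def)
  qed
  also have "\<dots> = real (card {a::int. a\<^sup>2 \<le> int n})"
    using int_power2_le_subset[of "int n"] by (simp add: sum_of_bool_eq Int_absorb1)
  also have "\<dots> \<le> 2 * sqrt (real n) + 1"
    using card_int_power2_le_approx[of "int n"] by (simp add: abs_le_iff)
  finally show ?thesis .
qed

theorem card_lattice_disc_approx: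
  "\<bar>real (card (lattice_disc n)) - pi * real n\<bar> \<le> 4 * sqrt (real n) + 1"
proof -
  interpret antimono_fun_sum_integral_diff "half_chord n"
    by (rule antimono_half_chord)
  define S where "S = (\<Sum>j\<le>n. half_chord n (real j))"
  have "pi * real n / 4 \<le> S" "S \<le> pi * real n / 4 + sqrt (real n)"
    using integral_le_sum[of n] sum_le_integral_add_first[of n] integral_half_chord[of n]
    by (simp_all add: S_def half_chord_def)
  moreover have "(\<Sum>a\<in>{-int n..int n}. half_chord n \<bar>of_int a\<bar>) = 2 * S - sqrt (real n)"
    using sum_symmetric_int[of "\<lambda>a. half_chord n (of_int a)" n] by (simp add: S_def half_chord_def)
  ultimately show ?thesis
    using card_lattice_disc_approx_chords[of n] unfolding abs_le_iff by linarith
qed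

section \<open>Partial summation against square-root bounded partial sums\<close>

lemma summation_by_parts:
  fixes a f :: "nat \<Rightarrow> 'a::comm_ring"
  assumes "1 \<le> p" and "p \<le> q"
  shows "(\<Sum>m\<in>{p..q}. a m * f m) = (\<Sum>k\<in>{1..q}. a k) * f q - (\<Sum>k\<in>{1..<p}. a k) * f p
           - (\<Sum>m\<in>{p..<q}. (\<Sum>k\<in>{1..m}. a k) * (f (Suc m) - f m))"
  using assms(2)
proof (induction q rule: dec_induct)
  case base
  have "{1..p} = insert p {1..<p}"
    using assms(1) by auto
  then show ?case
    by (simp add: algebra_simps)
next
  case (step q)
  then show ?case
    by (simp add: algebra_simps)
qed

lemma sqrt_mult_inverse_diff_le:
  fixes a :: real
  assumes "0 < a"
  shows "sqrt a * (1 / a - 1 / (a + 1)) \<le> 2 * (1 / sqrt a - 1 / sqrt (a + 1))"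
proof -
  define s s' where "s = sqrt a" and "s' = sqrt (a + 1)"
  have a: "a + 1 = s' * s'" "a = s * s"
    using assms by (simp_all add: s_def s'_def)
  have s: "0 < s" "0 < s'" "s \<le> s'" "s' * s' - s * s = 1"
    using assms by (simp_all add: s_def s'_def)
  have "s * (1 / (s * s) - 1 / (s' * s')) = (s' * s' - s * s) / (s * (s' * s'))"
    using s(1,2) by (simp add: field_simps)
  also have "\<dots> = 1 / (s * (s' * s'))"
    using s(4) by simp
  also have "\<dots> \<le> 2 / (s * s' * (s' + s))"
    using s(1-3) mult_left_mono[of "s' + s" "2 * s'" "s * s'"] by (simp add: divide_simps)
  also have "\<dots> = 2 / (s * s') * (1 / (s' + s))"
    by simp
  also have "1 / (s' + s) = s' - s"
  proof -
    have "(s' - s) * (s' + s) = 1"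
      using s(4) by (simp add: algebra_simps)
    then show ?thesis
      using s(1,2) by (simp add: field_simps)
  qed
  also have "2 / (s * s') * (s' - s) = 2 * (1 / s - 1 / s')"
    using s(1,2) by (simp add: field_simps)
  finally show ?thesis
    unfolding s_def[symmetric] s'_def[symmetric] unfolding a(1) unfolding a(2) .
qed

lemma sum_sqrt_mult_inverse_diff_le:
  fixes s :: real
  assumes "s < real p" and "p \<le> q"
  shows "(\<Sum>m\<in>{p..<q}. sqrt (real m - s) * (1 / (real m - s) - 1 / (real m + 1 - s)))
           \<le> 2 / sqrt (real p - s)"
proof -
  have "(\<Sum>m\<in>{p..<q}. sqrt (real m - s) * (1 / (real m - s) - 1 / (real m + 1 - s)))
          \<le> - 2 / sqrt (real q - s) - - 2 / sqrt (real p - s)"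
  proof (rule sum_le_telescope[OF assms(2)])
    fix m
    assume "p \<le> m"
    then have "0 < real m - s"
      using assms(1) by linarith
    from sqrt_mult_inverse_diff_le[OF this]
    show "sqrt (real m - s) * (1 / (real m - s) - 1 / (real m + 1 - s))
            \<le> - 2 / sqrt (real (Suc m) - s) - - 2 / sqrt (real m - s)"
      by (simp add: algebra_simps)
  qed
  also have "\<dots> \<le> 2 / sqrt (real p - s)"
    using assms by simp
  finally show ?thesis .
qed

lemma abs_diff_div_square_add_one_le:
  fixes x :: real
  assumes "1 \<le> x"
  shows "\<bar>(x + 1) / ((x + 1)\<^sup>2 + 1) - x / (x\<^sup>2 + 1)\<bar> \<le> 1 / x - 1 / (x + 1)"
proof -
  have pos: "0 < x\<^sup>2 + 1" "0 < (x + 1)\<^sup>2 + 1"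
    by (simp_all add: add_nonneg_pos)
  have d: "1 / x - 1 / (x + 1) = 1 / (x * (x + 1))"
    using assms by (simp add: field_simps)
  have "x / (x\<^sup>2 + 1) - (x + 1) / ((x + 1)\<^sup>2 + 1) = (x\<^sup>2 + x - 1) / ((x\<^sup>2 + 1) * ((x + 1)\<^sup>2 + 1))"
    using pos by (simp add: field_simps) (simp add: algebra_simps power2_eq_square)
  moreover have "0 \<le> x\<^sup>2 + x - 1"
    using assms one_le_power[of x 2] by linarith
  moreover have "(x\<^sup>2 + x - 1) * (x * (x + 1)) \<le> ((x + 1)\<^sup>2 + 1) * (x\<^sup>2 + 1)"
    using assms by (simp add: algebra_simps power2_eq_square power3_eq_cube)
  ultimately show ?thesis
    using assms pos unfolding d by (simp add: divide_simps abs_minus_commute)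
qed

lemma sqrt_mult_abs_inverse_diff_le:
  fixes x t :: real
  assumes "0 \<le> t" and "t < x"
  shows "sqrt x * \<bar>1 / (x + 1 - t) - 1 / (x - t)\<bar> \<le> (sqrt t + sqrt (x - t)) * (1 / (x - t) - 1 / (x + 1 - t))"
proof -
  have "0 \<le> 1 / (x - t) - 1 / (x + 1 - t)"
    using assms(2) by (simp add: divide_simps)
  moreover have "sqrt x \<le> sqrt t + sqrt (x - t)"
    using sqrt_add_le_add_sqrt[of t "x - t"] assms by simp
  ultimately show ?thesis
    by (simp add: abs_minus_commute mult_right_mono)
qed

lemma sum_sqrt_variation_inverse_above:
  fixes t :: real
  assumes "0 < t" and "t + 1 \<le> real B" and "B \<le> M"
  shows "(\<Sum>m\<in>{B..<M}. sqrt (real m) * \<bar>1 / (real (Suc m) - t) - 1 / (real m - t)\<bar>)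
           \<le> sqrt t / (real B - t) + 2"
proof -
  define d where "d m = 1 / (real m - t) - 1 / (real m + 1 - t)" for m
  have "(\<Sum>m\<in>{B..<M}. sqrt (real m) * \<bar>1 / (real (Suc m) - t) - 1 / (real m - t)\<bar>)
      \<le> (\<Sum>m\<in>{B..<M}. (sqrt t + sqrt (real m - t)) * d m)"
  proof (rule sum_mono)
    fix m
    assume "m \<in> {B..<M}"
    then have "t < real m"
      using assms(2) by simp
    with sqrt_mult_abs_inverse_diff_le[of t "real m"] assms(1)
    show "sqrt (real m) * \<bar>1 / (real (Suc m) - t) - 1 / (real m - t)\<bar> \<le> (sqrt t + sqrt (real m - t)) * d m"
      by (simp add: d_def add.commute)
  qed
  also have "\<dots> = sqrt t * (\<Sum>m\<in>{B..<M}. d m) + (\<Sum>m\<in>{B..<M}. sqrt (real m - t) * d m)"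
    by (simp add: distrib_right sum.distrib sum_distrib_left)
  also have "(\<Sum>m\<in>{B..<M}. d m) = 1 / (real B - t) - 1 / (real M - t)"
    using sum_Suc_diff'[OF assms(3), of "\<lambda>m. - 1 / (real m - t)"] by (simp add: d_def add.commute)
  also have "sqrt t * (1 / (real B - t) - 1 / (real M - t)) \<le> sqrt t / (real B - t)"
    using assms by (simp add: right_diff_distrib)
  also have "(\<Sum>m\<in>{B..<M}. sqrt (real m - t) * d m) \<le> 2 / sqrt (real B - t)"
    using sum_sqrt_mult_inverse_diff_le[of t B M] assms by (simp add: d_def)
  also have "2 / sqrt (real B - t) \<le> 2"
    using assms(2) by (simp add: divide_simps)
  finally show ?thesis
    by simp
qed

lemma sum_sqrt_variation_div_square_add_one:
  assumes "1 \<le> p" and "p \<le> q"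
  shows "(\<Sum>m\<in>{p..<q}. sqrt (real m) * \<bar>real (Suc m) / ((real (Suc m))\<^sup>2 + 1) - real m / ((real m)\<^sup>2 + 1)\<bar>) \<le> 2"
proof -
  have "(\<Sum>m\<in>{p..<q}. sqrt (real m) * \<bar>real (Suc m) / ((real (Suc m))\<^sup>2 + 1) - real m / ((real m)\<^sup>2 + 1)\<bar>)
      \<le> (\<Sum>m\<in>{p..<q}. sqrt (real m) * (1 / real m - 1 / (real m + 1)))"
  proof (intro sum_mono mult_left_mono)
    fix m
    assume "m \<in> {p..<q}"
    then have "1 \<le> real m"
      using assms(1) by simp
    from abs_diff_div_square_add_one_le[OF this]
    show "\<bar>real (Suc m) / ((real (Suc m))\<^sup>2 + 1) - real m / ((real m)\<^sup>2 + 1)\<bar> \<le> 1 / real m - 1 / (real m + 1)"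
      by (simp add: add.commute)
  qed simp
  also have "\<dots> \<le> 2 / sqrt (real p)"
    using sum_sqrt_mult_inverse_diff_le[of 0 p q] assms by simp
  also have "\<dots> \<le> 2"
    using assms(1) by (simp add: divide_simps)
  finally show ?thesis .
qed

locale sqrt_bounded_partial_sums =
  fixes a :: "nat \<Rightarrow> real" and C :: real
  assumes partial_sum_bound: "\<bar>\<Sum>k\<in>{1..n}. a k\<bar> \<le> C * sqrt (real n)"
begin

lemma bound_nonneg: "0 \<le> C"
  using partial_sum_bound[of 1] by simp

lemma summation_by_parts_bound:
  assumes "1 \<le> p" and "p \<le> q"
  shows "\<bar>\<Sum>m\<in>{p..q}. a m * f m\<bar> \<le> C * (sqrt (real q) * \<bar>f q\<bar> + sqrt (real (p - 1)) * \<bar>f p\<bar>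
           + (\<Sum>m\<in>{p..<q}. sqrt (real m) * \<bar>f (Suc m) - f m\<bar>))"
proof -
  define E where "E n = (\<Sum>k\<in>{1..n}. a k)" for n
  have "{1..<p} = {1..p - 1}"
    using assms(1) by auto
  then have "\<bar>\<Sum>m\<in>{p..q}. a m * f m\<bar>
      = \<bar>E q * f q - E (p - 1) * f p - (\<Sum>m\<in>{p..<q}. E m * (f (Suc m) - f m))\<bar>"
    by (simp add: summation_by_parts[OF assms] E_def)
  also have "\<dots> \<le> \<bar>E q\<bar> * \<bar>f q\<bar> + \<bar>E (p - 1)\<bar> * \<bar>f p\<bar> + (\<Sum>m\<in>{p..<q}. \<bar>E m\<bar> * \<bar>f (Suc m) - f m\<bar>)"
  proof -
    let ?X = "E q * f q" and ?Y = "E (p - 1) * f p" and ?Z = "\<Sum>m\<in>{p..<q}. E m * (f (Suc m) - f m)"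
    have "\<bar>?Z\<bar> \<le> (\<Sum>m\<in>{p..<q}. \<bar>E m\<bar> * \<bar>f (Suc m) - f m\<bar>)"
      using sum_abs[of "\<lambda>m. E m * (f (Suc m) - f m)" "{p..<q}"] by (simp add: abs_mult)
    then show ?thesis
      using abs_triangle_ineq4[of "?X - ?Y" ?Z] abs_triangle_ineq4[of ?X ?Y]
        abs_mult[of "E q" "f q"] abs_mult[of "E (p - 1)" "f p"] by linarith
  qed
  also have "\<dots> \<le> C * sqrt (real q) * \<bar>f q\<bar> + C * sqrt (real (p - 1)) * \<bar>f p\<bar>
      + (\<Sum>m\<in>{p..<q}. C * sqrt (real m) * \<bar>f (Suc m) - f m\<bar>)"
    unfolding E_def by (intro add_mono sum_mono mult_right_mono partial_sum_bound) auto
  finally show ?thesis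
    by (simp add: algebra_simps sum_distrib_left)
qed

lemma sum_div_below_bound:
  fixes t :: real
  assumes "1 \<le> A" and "real A < t"
  shows "\<bar>\<Sum>m\<in>{1..A}. a m / (real m - t)\<bar> \<le> 2 * C * sqrt (real A) / (t - real A)"
proof -
  define f where "f m = 1 / (real m - t)" for m
  have step: "f (Suc m) \<le> f m" if "m < A" for m
    using that assms(2) by (simp add: f_def divide_simps)
  have "(\<Sum>m\<in>{1..<A}. sqrt (real m) * \<bar>f (Suc m) - f m\<bar>) \<le> - sqrt (real A) * f A - - sqrt (real A) * f 1"
  proof (rule sum_le_telescope[OF assms(1)])
    fix m
    assume "m < A"
    then show "sqrt (real m) * \<bar>f (Suc m) - f m\<bar> \<le> - sqrt (real A) * f (Suc m) - - sqrt (real A) * f m"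
      using step[of m] mult_right_mono[of "sqrt (real m)" "sqrt (real A)" "f m - f (Suc m)"]
      by (simp add: algebra_simps)
  qed
  moreover have "f 1 \<le> 0" "f A = - (1 / (t - real A))"
    using assms by (simp_all add: f_def divide_simps)
  moreover have "sqrt (real A) * f 1 \<le> 0"
    using \<open>f 1 \<le> 0\<close> by (simp add: mult_nonneg_nonpos)
  ultimately have variation: "(\<Sum>m\<in>{1..<A}. sqrt (real m) * \<bar>f (Suc m) - f m\<bar>) \<le> sqrt (real A) / (t - real A)"
    by simp
  have "\<bar>\<Sum>m\<in>{1..A}. a m / (real m - t)\<bar> = \<bar>\<Sum>m\<in>{1..A}. a m * f m\<bar>"
    by (simp add: f_def)
  also have "\<dots> \<le> C * (sqrt (real A) * \<bar>f A\<bar> + sqrt (real (1 - 1)) * \<bar>f 1\<bar>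
      + (\<Sum>m\<in>{1..<A}. sqrt (real m) * \<bar>f (Suc m) - f m\<bar>))"
    by (rule summation_by_parts_bound[OF order_refl assms(1)])
  also have "\<dots> \<le> C * (sqrt (real A) / (t - real A) + 0 + sqrt (real A) / (t - real A))"
    using variation assms(2) bound_nonneg by (intro mult_left_mono add_mono) (simp_all add: f_def)
  finally show ?thesis
    by (simp add: ac_simps)
qed

lemma sum_div_above_bound:
  fixes t :: real
  assumes "0 < t" and "t + 1 \<le> real B" and "B \<le> M" and "2 * t \<le> real M"
  shows "\<bar>\<Sum>m\<in>{B..M}. a m / (real m - t)\<bar> \<le> C * (4 + (sqrt (real B) + sqrt t) / (real B - t))"
proof -
  define f where "f m = 1 / (real m - t)" for m
  have "sqrt (real M) \<le> 2 * (real M - t)"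
    using sqrt_of_nat_le[of M] assms(4) by simp
  then have last: "sqrt (real M) * \<bar>f M\<bar> \<le> 2"
    using assms by (simp add: f_def divide_simps)
  have first: "sqrt (real (B - 1)) * \<bar>f B\<bar> \<le> sqrt (real B) / (real B - t)"
    using assms(2) by (simp add: f_def divide_right_mono)
  have variation: "(\<Sum>m\<in>{B..<M}. sqrt (real m) * \<bar>f (Suc m) - f m\<bar>) \<le> sqrt t / (real B - t) + 2"
    using sum_sqrt_variation_inverse_above[OF assms(1-3)] by (simp add: f_def)
  have "1 \<le> B"
    using assms(1,2) by simp
  have "\<bar>\<Sum>m\<in>{B..M}. a m * f m\<bar> \<le> C * (sqrt (real M) * \<bar>f M\<bar> + sqrt (real (B - 1)) * \<bar>f B\<bar>
      + (\<Sum>m\<in>{B..<M}. sqrt (real m) * \<bar>f (Suc m) - f m\<bar>))"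
    using \<open>1 \<le> B\<close> assms(3) by (rule summation_by_parts_bound)
  also have "\<dots> \<le> C * (2 + sqrt (real B) / (real B - t) + (sqrt t / (real B - t) + 2))"
    using last first variation bound_nonneg by (intro mult_left_mono add_mono) auto
  finally show ?thesis
    by (simp add: f_def add_divide_distrib)
qed

lemma sum_mult_div_square_bound:
  assumes "1 \<le> p" and "p \<le> q"
  shows "\<bar>\<Sum>m\<in>{p..q}. a m * (real m / ((real m)\<^sup>2 + 1))\<bar> \<le> 4 * C"
proof -
  define f where "f m = real m / ((real m)\<^sup>2 + 1)" for m
  have endpoint: "sqrt (real k) * \<bar>f k\<bar> \<le> 1" for k
  proof -
    have "sqrt (real k) * real k \<le> real k * real k"
      using sqrt_of_nat_le by (intro mult_right_mono) auto
    then show ?thesis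
      by (simp add: f_def divide_simps power2_eq_square add_nonneg_pos)
  qed
  have "sqrt (real (p - 1)) * \<bar>f p\<bar> \<le> sqrt (real p) * \<bar>f p\<bar>"
    by (intro mult_right_mono) auto
  then have "sqrt (real (p - 1)) * \<bar>f p\<bar> \<le> 1"
    using endpoint[of p] by linarith
  moreover have "(\<Sum>m\<in>{p..<q}. sqrt (real m) * \<bar>f (Suc m) - f m\<bar>) \<le> 2"
    using sum_sqrt_variation_div_square_add_one[OF assms] by (simp add: f_def)
  ultimately have "C * (sqrt (real q) * \<bar>f q\<bar> + sqrt (real (p - 1)) * \<bar>f p\<bar>
      + (\<Sum>m\<in>{p..<q}. sqrt (real m) * \<bar>f (Suc m) - f m\<bar>)) \<le> C * (1 + 1 + 2)"
    using endpoint[of q] bound_nonneg by (intro mult_left_mono add_mono) auto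
  with summation_by_parts_bound[OF assms, of f] show ?thesis
    by (simp add: f_def)
qed

end

lemma sqrt_bounded_partial_sums_r2: "sqrt_bounded_partial_sums (\<lambda>m. real (r2 m) - pi) 6"
proof
  fix n
  show "\<bar>\<Sum>m\<in>{1..n}. real (r2 m) - pi\<bar> \<le> 6 * sqrt (real n)"
  proof (cases "n = 0")
    case False
    have "{..n} = insert 0 {1..n}"
      by auto
    then have "(\<Sum>m\<in>{1..n}. real (r2 m) - pi) = real (card (lattice_disc n)) - 1 - pi * real n"
      using sum_r2_eq_card_lattice_disc[of n] by (simp add: sum_subtractf r2_0 flip: of_nat_sum)
    moreover have "1 \<le> sqrt (real n)"
      using False by simp
    ultimately show ?thesis
      using card_lattice_disc_approx[of n] unfolding abs_le_iff by linarith
  qed simp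
qed

section \<open>Comparison with logarithms\<close>

lemma sum_inverse_shift_bounds:
  fixes c :: real
  assumes "0 < real p + c" and "p \<le> q"
  shows "ln (real q + 1 + c) - ln (real p + c) \<le> (\<Sum>m\<in>{p..q}. 1 / (real m + c))"
    and "(\<Sum>m\<in>{p..q}. 1 / (real m + c)) \<le> ln (real q + 1 + c) - ln (real p + c) + 1 / (real p + c)"
proof -
  have pos: "0 < real m + c" if "p \<le> m" for m
    using that assms(1) by linarith
  have range: "{p..<Suc q} = {p..q}" and "p \<le> Suc q"
    using assms(2) by auto
  have "ln (real (Suc q) + c) - ln (real p + c) \<le> (\<Sum>m\<in>{p..<Suc q}. 1 / (real m + c))"
  proof (rule telescope_le_sum[OF \<open>p \<le> Suc q\<close>])
    fix m
    assume "p \<le> m"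
    with ln_diff_le[of "real m + 1 + c" "real m + c"] pos[of m]
    show "ln (real (Suc m) + c) - ln (real m + c) \<le> 1 / (real m + c)"
      by (simp add: add_ac)
  qed
  then show "ln (real q + 1 + c) - ln (real p + c) \<le> (\<Sum>m\<in>{p..q}. 1 / (real m + c))"
    unfolding range by (simp add: add_ac)
  have "(\<Sum>m\<in>{p..<Suc q}. 1 / (real m + c))
      \<le> (ln (real (Suc q) + c) - 1 / (real (Suc q) + c)) - (ln (real p + c) - 1 / (real p + c))"
  proof (rule sum_le_telescope[OF \<open>p \<le> Suc q\<close>])
    fix m
    assume "p \<le> m"
    with ln_diff_le[of "real m + c" "real m + 1 + c"] pos[of m]
    show "1 / (real m + c) \<le> (ln (real (Suc m) + c) - 1 / (real (Suc m) + c)) - (ln (real m + c) - 1 / (real m + c))"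
      by (simp add: add_ac diff_divide_distrib)
  qed
  moreover have "0 < 1 / (real (Suc q) + c)"
    using pos[of "Suc q"] assms(2) by simp
  ultimately have "(\<Sum>m\<in>{p..<Suc q}. 1 / (real m + c)) \<le> ln (real (Suc q) + c) - ln (real p + c) + 1 / (real p + c)"
    by linarith
  then show "(\<Sum>m\<in>{p..q}. 1 / (real m + c)) \<le> ln (real q + 1 + c) - ln (real p + c) + 1 / (real p + c)"
    by (simp only: range of_nat_Suc add.commute[of 1 "real q"])
qed

lemma sum_inverse_below_bounds:
  fixes t :: real
  assumes "1 \<le> A" and "real A < t"
  shows "ln (t - real A) - ln t - 1 / (t - real A) \<le> (\<Sum>m\<in>{1..A}. 1 / (real m - t))"
    and "(\<Sum>m\<in>{1..A}. 1 / (real m - t)) \<le> ln (t - real A) - ln t"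
proof -
  define c where "c = t - real A - 1"
  have "(\<Sum>m\<in>{1..A}. 1 / (real m - t)) = (\<Sum>m\<in>{1..A}. 1 / (real (A + 1 - m) - t))"
    by (subst sum.atLeastAtMost_rev) simp
  also have "\<dots> = (\<Sum>m\<in>{1..A}. - (1 / (real m + c)))"
  proof (rule sum.cong)
    fix m
    assume "m \<in> {1..A}"
    then have "real (A + 1 - m) - t = - (real m + c)"
      by (simp add: c_def of_nat_diff)
    then show "1 / (real (A + 1 - m) - t) = - (1 / (real m + c))"
      by (simp only: divide_minus_right)
  qed simp
  also have "\<dots> = - (\<Sum>m\<in>{1..A}. 1 / (real m + c))"
    by (simp add: sum_negf)
  finally have reflect: "(\<Sum>m\<in>{1..A}. 1 / (real m - t)) = - (\<Sum>m\<in>{1..A}. 1 / (real m + c))" .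
  have "0 < real 1 + c"
    using assms(2) by (simp add: c_def)
  note bounds = sum_inverse_shift_bounds[OF this assms(1)]
  show "ln (t - real A) - ln t - 1 / (t - real A) \<le> (\<Sum>m\<in>{1..A}. 1 / (real m - t))"
    using bounds(2) unfolding reflect by (simp add: c_def)
  show "(\<Sum>m\<in>{1..A}. 1 / (real m - t)) \<le> ln (t - real A) - ln t"
    using bounds(1) unfolding reflect by (simp add: c_def)
qed

lemma sum_inverse_above_bounds:
  fixes t :: real
  assumes "t < real B" and "B \<le> M"
  shows "ln (real M + 1 - t) - ln (real B - t) \<le> (\<Sum>m\<in>{B..M}. 1 / (real m - t))"
    and "(\<Sum>m\<in>{B..M}. 1 / (real m - t)) \<le> ln (real M + 1 - t) - ln (real B - t) + 1 / (real B - t)"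
  using sum_inverse_shift_bounds[of B "- t" M] assms by simp_all

lemma sum_div_square_add_one_bounds:
  assumes "1 \<le> p" and "p \<le> q"
  shows "ln (real q + 2) - ln (real p + 1) \<le> (\<Sum>m\<in>{p..q}. real m / ((real m)\<^sup>2 + 1))"
    and "(\<Sum>m\<in>{p..q}. real m / ((real m)\<^sup>2 + 1)) \<le> ln (real q + 1) - ln (real p) + 1 / real p"
proof -
  have between: "1 / (real m + 1) \<le> real m / ((real m)\<^sup>2 + 1)" "real m / ((real m)\<^sup>2 + 1) \<le> 1 / (real m + 0)"
    if "p \<le> m" for m
  proof -
    have pos: "0 < (real m)\<^sup>2 + 1"
      by (simp add: add_nonneg_pos)
    have "(real m)\<^sup>2 + 1 \<le> real m * (real m + 1)"
      using that assms(1) by (simp add: power2_eq_square algebra_simps)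
    with pos show "1 / (real m + 1) \<le> real m / ((real m)\<^sup>2 + 1)"
      by (simp add: divide_simps)
    show "real m / ((real m)\<^sup>2 + 1) \<le> 1 / (real m + 0)"
      using that assms(1) pos by (simp add: divide_simps power2_eq_square)
  qed
  have "ln (real q + 1 + 1) - ln (real p + 1) \<le> (\<Sum>m\<in>{p..q}. 1 / (real m + 1))"
    using assms by (intro sum_inverse_shift_bounds) auto
  also have "\<dots> \<le> (\<Sum>m\<in>{p..q}. real m / ((real m)\<^sup>2 + 1))"
    using between(1) by (intro sum_mono) auto
  finally show "ln (real q + 2) - ln (real p + 1) \<le> (\<Sum>m\<in>{p..q}. real m / ((real m)\<^sup>2 + 1))"
    by (simp add: add.assoc)
  have "(\<Sum>m\<in>{p..q}. real m / ((real m)\<^sup>2 + 1)) \<le> (\<Sum>m\<in>{p..q}. 1 / (real m + 0))"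
    using between(2) by (intro sum_mono) auto
  also have "\<dots> \<le> ln (real q + 1 + 0) - ln (real p + 0) + 1 / (real p + 0)"
    using assms by (intro sum_inverse_shift_bounds) auto
  finally show "(\<Sum>m\<in>{p..q}. real m / ((real m)\<^sup>2 + 1)) \<le> ln (real q + 1) - ln (real p) + 1 / real p"
    by simp
qed

section \<open>The sum outside the window\<close>

lemma has_sum_atLeast_of_nonneg_bounded:
  fixes h :: "nat \<Rightarrow> real"
  assumes nonneg: "\<And>m. B \<le> m \<Longrightarrow> 0 \<le> h m"
    and bound: "\<And>M. N \<le> M \<Longrightarrow> \<bar>c + (\<Sum>m\<in>{B..M}. h m)\<bar> \<le> K"
  shows "\<exists>s. (h has_sum s) {B..} \<and> \<bar>c + s\<bar> \<le> K"
proof -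
  have upper: "sum h F \<le> K - c" if "finite F" and "F \<subseteq> {B..}" for F
  proof -
    define M where "M = max N (Max (insert B F))"
    have "F \<subseteq> {B..M}"
    proof
      fix x
      assume "x \<in> F"
      then have "B \<le> x" "x \<le> Max (insert B F)"
        using that by auto
      then show "x \<in> {B..M}"
        by (simp add: M_def)
    qed
    then have "sum h F \<le> (\<Sum>m\<in>{B..M}. h m)"
      by (intro sum_mono2) (auto intro: nonneg)
    also have "\<dots> \<le> K - c"
      using bound[of M] by (simp add: M_def abs_le_iff)
    finally show ?thesis .
  qed
  then have "h summable_on {B..}"
    using nonneg by (intro nonneg_bdd_above_summable_on bdd_aboveI[of _ "K - c"]) auto
  then obtain s where s: "(h has_sum s) {B..}"
    unfolding summable_on_def by blast
  have "s \<le> K - c"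
    using s upper by (rule has_sum_le_finite_sums)
  moreover have "(\<Sum>m\<in>{B..max B N}. h m) \<le> s"
    using s nonneg by (intro finite_sum_le_has_sum) auto
  ultimately show ?thesis
    using s bound[of "max B N"] by (auto simp: abs_le_iff)
qed

definition kernel :: "real \<Rightarrow> nat \<Rightarrow> real" where
  "kernel t m = 1 / (real m - t) - real m / ((real m)\<^sup>2 + 1)"

lemma kernel_nonneg:
  assumes "0 \<le> t" and "t < real m"
  shows "0 \<le> kernel t m"
proof -
  have "real m * (real m - t) \<le> (real m)\<^sup>2 + 1"
    using assms by (simp add: power2_eq_square algebra_simps)
  then show ?thesis
    using assms by (simp add: kernel_def divide_simps add_nonneg_pos)
qed

text \<open>\<open>A\<close> is the last summation index below the excluded window and \<open>B\<close> the first one above it.\<close>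
locale gap_window =
  fixes t w :: real and A B :: nat
  assumes w_ge: "2 \<le> w" and t_ge: "3 * w \<le> t" and t_le: "t \<le> 3 * w\<^sup>2"
    and left_gap: "t - 2 * w \<le> real A" "2 * real A + w \<le> 2 * t"
    and right_gap: "2 * t + w \<le> 2 * real B" "real B \<le> t + 2 * w"
begin

lemma window_bounds:
  shows "1 \<le> A" "real A < t" "0 < t" "t + 1 \<le> real B" "real B \<le> 2 * t"
    and "sqrt (real A) \<le> 2 * w" "sqrt t \<le> 2 * w" "sqrt (real B) \<le> 2 * w"
proof -
  have "2 * w \<le> w\<^sup>2"
    using w_ge by (simp add: power2_eq_square mult_right_mono)
  then have "real B \<le> (2 * w)\<^sup>2" "t \<le> (2 * w)\<^sup>2" "real A \<le> (2 * w)\<^sup>2"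
    using t_le right_gap left_gap w_ge by (simp_all add: power_mult_distrib)
  then show "sqrt (real A) \<le> 2 * w" "sqrt t \<le> 2 * w" "sqrt (real B) \<le> 2 * w"
    using w_ge by (simp_all add: real_le_lsqrt)
  show "1 \<le> A" "real A < t" "0 < t" "t + 1 \<le> real B" "real B \<le> 2 * t"
    by (use w_ge t_ge left_gap right_gap in linarith)+
qed

lemma sum_kernel_bound:
  assumes M: "2 * t \<le> real M"
  shows "\<bar>(\<Sum>m\<in>{1..A}. kernel t m) + (\<Sum>m\<in>{B..M}. kernel t m) + ln t\<bar> \<le> 9"
proof -
  note bounds = window_bounds
  have "B \<le> M"
    using bounds(5) M by linarith
  have "t < real B" "real A < real B"
    using bounds(2,4) by linarith+
  then have "1 \<le> B"
    using bounds(1) by simp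
  note L1 = sum_inverse_below_bounds[OF bounds(1,2)]
  note U1 = sum_inverse_above_bounds[OF \<open>t < real B\<close> \<open>B \<le> M\<close>]
  have L2: "ln (real A + 2) - ln 2 \<le> (\<Sum>m\<in>{1..A}. real m / ((real m)\<^sup>2 + 1))"
    "(\<Sum>m\<in>{1..A}. real m / ((real m)\<^sup>2 + 1)) \<le> ln (real A + 1) + 1"
    using sum_div_square_add_one_bounds[OF order_refl bounds(1)] by simp_all
  note U2 = sum_div_square_add_one_bounds[OF \<open>1 \<le> B\<close> \<open>B \<le> M\<close>]
  have "0 \<le> real A"
    by simp
  note facts = this left_gap right_gap t_ge w_ge bounds M
  have "ln (t - real A) - ln (real B - t) \<le> 4 - 1"
    by (intro ln_diff_le_of_le_mult) (use facts in \<open>simp add: algebra_simps\<close>)+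
  moreover have "ln (real B - t) - ln (t - real A) \<le> 4 - 1"
    by (intro ln_diff_le_of_le_mult) (use facts in \<open>simp add: algebra_simps\<close>)+
  moreover have "ln (real B + 1) - ln (real A + 2) \<le> 5 - 1"
    by (intro ln_diff_le_of_le_mult) (use facts in \<open>simp add: algebra_simps\<close>)+
  moreover have "ln (real M + 1) - ln (real M + 1 - t) \<le> 2 - 1"
    by (intro ln_diff_le_of_le_mult) (use facts in \<open>simp add: algebra_simps\<close>)+
  moreover have "ln 2 \<le> (1::real)"
    using ln_le_minus_one[of 2] by simp
  moreover have "ln (real A + 1) \<le> ln (real B)" "ln (real M + 1 - t) \<le> ln (real M + 2)"
    using bounds M by auto
  moreover have "1 / (t - real A) \<le> 1" "1 / (real B - t) \<le> 1" "1 / real B \<le> 1"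
    using facts by (simp_all add: divide_simps)
  ultimately show ?thesis
    using L1 U1 L2 U2 bounds unfolding kernel_def sum_subtractf abs_le_iff by linarith
qed

lemma sum_weighted_kernel_bound:
  assumes "sqrt_bounded_partial_sums a C" and M: "2 * t \<le> real M"
  shows "\<bar>(\<Sum>m\<in>{1..A}. a m * kernel t m) + (\<Sum>m\<in>{B..M}. a m * kernel t m)\<bar> \<le> 28 * C"
proof -
  interpret sqrt_bounded_partial_sums a C
    by (fact assms(1))
  note bounds = window_bounds
  have "B \<le> M"
    using bounds(5) M by linarith
  have kernel_split: "(\<Sum>m\<in>I. a m * kernel t m) = (\<Sum>m\<in>I. a m / (real m - t)) - (\<Sum>m\<in>I. a m * (real m / ((real m)\<^sup>2 + 1)))"
    for I
    by (simp add: kernel_def right_diff_distrib sum_subtractf)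
  have "sqrt (real A) / (t - real A) \<le> 4"
    using bounds left_gap by (simp add: divide_simps)
  then have "C * (sqrt (real A) / (t - real A)) \<le> C * 4"
    using bound_nonneg by (rule mult_left_mono)
  moreover have "2 * C * sqrt (real A) / (t - real A) = 2 * (C * (sqrt (real A) / (t - real A)))"
    by simp
  ultimately have left: "\<bar>\<Sum>m\<in>{1..A}. a m / (real m - t)\<bar> \<le> 8 * C"
    using sum_div_below_bound[OF bounds(1,2)] by linarith
  have "(sqrt (real B) + sqrt t) / (real B - t) \<le> 8"
    using bounds right_gap by (simp add: divide_simps)
  then have "C * (4 + (sqrt (real B) + sqrt t) / (real B - t)) \<le> C * 12"
    using bound_nonneg by (intro mult_left_mono) auto
  then have right: "\<bar>\<Sum>m\<in>{B..M}. a m / (real m - t)\<bar> \<le> 12 * C"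
    using sum_div_above_bound[OF bounds(3,4) \<open>B \<le> M\<close> M] by linarith
  have "1 \<le> B"
    using bounds(1,2,4) by simp
  show ?thesis
    using left right sum_mult_div_square_bound[OF order_refl bounds(1)]
      sum_mult_div_square_bound[OF \<open>1 \<le> B\<close> \<open>B \<le> M\<close>]
    unfolding kernel_split abs_le_iff by linarith
qed

lemma sum_r2_kernel_bound:
  assumes "2 * t \<le> real M"
  shows "\<bar>(\<Sum>m\<in>{1..A}. real (r2 m) * kernel t m) + (\<Sum>m\<in>{B..M}. real (r2 m) * kernel t m) + pi * ln t\<bar>
           \<le> 168 + 9 * pi"
proof -
  have r2_split: "(\<Sum>m\<in>I. real (r2 m) * kernel t m) = (\<Sum>m\<in>I. (real (r2 m) - pi) * kernel t m) + pi * (\<Sum>m\<in>I. kernel t m)"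
    for I
    by (simp add: sum_distrib_left sum.distrib[symmetric] algebra_simps)
  have "\<bar>pi * ((\<Sum>m\<in>{1..A}. kernel t m) + (\<Sum>m\<in>{B..M}. kernel t m) + ln t)\<bar> \<le> pi * 9"
    using sum_kernel_bound[OF assms] by (simp add: abs_mult)
  then show ?thesis
    using sum_weighted_kernel_bound[OF sqrt_bounded_partial_sums_r2 assms]
    unfolding r2_split abs_le_iff by (simp add: algebra_simps)
qed

lemma has_sum_r2_kernel:
  "\<exists>s. ((\<lambda>m. real (r2 m) * kernel t m) has_sum s) ({1..A} \<union> {B..}) \<and> \<bar>s + pi * ln t\<bar> \<le> 168 + 9 * pi"
proof -
  define h where "h = (\<lambda>m. real (r2 m) * kernel t m)"
  have "0 \<le> h m" if "B \<le> m" for m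
  proof -
    have "real B \<le> real m"
      using that by simp
    then show ?thesis
      using window_bounds(3,4) by (simp add: h_def kernel_nonneg)
  qed
  moreover have "\<bar>((\<Sum>m\<in>{1..A}. h m) + pi * ln t) + (\<Sum>m\<in>{B..M}. h m)\<bar> \<le> 168 + 9 * pi"
    if "nat \<lceil>2 * t\<rceil> \<le> M" for M
    using sum_r2_kernel_bound[of M] that by (simp add: h_def algebra_simps)
  ultimately obtain s where s: "(h has_sum s) {B..}" "\<bar>((\<Sum>m\<in>{1..A}. h m) + pi * ln t) + s\<bar> \<le> 168 + 9 * pi"
    using has_sum_atLeast_of_nonneg_bounded by blast
  have "(h has_sum ((\<Sum>m\<in>{1..A}. h m) + s)) ({1..A} \<union> {B..})"
    using window_bounds(2,4) s(1) by (intro has_sum_Un_disjoint has_sum_finite) auto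
  then show ?thesis
    using s(2) unfolding h_def by (intro exI[of _ "(\<Sum>m\<in>{1..A}. h m) + s"]) (simp add: h_def algebra_simps)
qed
end

lemma gap_window_floor_ceiling:
  fixes u w c t :: real
  assumes "2 \<le> w" and "4 * c \<le> w" and "4 * w \<le> u" and "u \<le> 2 * w\<^sup>2" and "\<bar>u - t\<bar> \<le> c"
  shows "gap_window t w (nat (\<lceil>u - w\<rceil> - 1)) (nat (\<lfloor>u + w\<rfloor> + 1))"
proof -
  have A: "u - w - 1 \<le> real (nat (\<lceil>u - w\<rceil> - 1))" "real (nat (\<lceil>u - w\<rceil> - 1)) < u - w"
    using ceiling_correct[of "u - w"] assms(1,3) by (simp_all add: of_nat_nat)
  have B: "u + w < real (nat (\<lfloor>u + w\<rfloor> + 1))" "real (nat (\<lfloor>u + w\<rfloor> + 1)) \<le> u + w + 1"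
    using floor_correct[of "u + w"] assms(1,3) by (simp_all add: of_nat_nat)
  have "w \<le> w\<^sup>2"
    using assms(1) by (simp add: power2_eq_square)
  then show ?thesis
    using A B assms unfolding abs_le_iff by unfold_locales linarith+
qed

lemma far_points_eq_Un:
  fixes u w :: real
  assumes "0 \<le> w" and "w \<le> u"
  shows "{m::nat. 1 \<le> m \<and> w < \<bar>real m - u\<bar>} = {1..nat (\<lceil>u - w\<rceil> - 1)} \<union> {nat (\<lfloor>u + w\<rfloor> + 1)..}"
proof -
  have le_nat: "m \<le> nat (z - 1) \<longleftrightarrow> int m < z" if "1 \<le> m" for m :: nat and z :: int
    using that by linarith
  have nat_le: "nat (z + 1) \<le> m \<longleftrightarrow> z < int m" if "0 \<le> z" for m :: nat and z :: int
    using that by linarith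
  have "m \<le> nat (\<lceil>u - w\<rceil> - 1) \<longleftrightarrow> real m < u - w" if "1 \<le> m" for m :: nat
    using le_nat[OF that] by (simp add: less_ceiling_iff)
  moreover have "nat (\<lfloor>u + w\<rfloor> + 1) \<le> m \<longleftrightarrow> u + w < real m" for m :: nat
    using nat_le[of "\<lfloor>u + w\<rfloor>" m] assms by (simp add: floor_less_iff)
  ultimately show ?thesis
    using assms by (auto simp: abs_if)
qed

lemma eventually_parameter_bounds:
  "eventually (\<lambda>v::real. 2 \<le> sqrt v \<and> 4 * v powr (1/3) \<le> sqrt v \<and> 4 * sqrt v \<le> v powr (9/10)) at_top"
proof -
  have "eventually (\<lambda>v::real. 2 \<le> sqrt v) at_top"
    by real_asymp
  moreover have "eventually (\<lambda>v::real. 4 * v powr (1/3) \<le> sqrt v) at_top"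
    by real_asymp
  moreover have "eventually (\<lambda>v::real. 4 * sqrt v \<le> v powr (9/10)) at_top"
    by real_asymp
  ultimately show ?thesis
    by eventually_elim auto
qed

lemma has_sum_r2_kernel_far_from:
  fixes u v t :: real
  assumes "2 \<le> sqrt v" and "4 * v powr (1/3) \<le> sqrt v" and "4 * sqrt v \<le> u" and "u \<le> 2 * v"
    and "\<bar>u - t\<bar> \<le> v powr (1/3)"
  shows "\<exists>s. ((\<lambda>m. real (r2 m) * kernel t m) has_sum s) {m. 1 \<le> m \<and> v powr (1/2) < \<bar>real m - u\<bar>}
           \<and> \<bar>s + pi * ln t\<bar> \<le> 168 + 9 * pi"
proof -
  define w where "w = sqrt v"
  have "0 < sqrt v"
    using assms(1) by linarith
  then have w: "v powr (1/2) = w" "u \<le> 2 * w\<^sup>2"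
    using assms(4) by (simp_all add: w_def powr_half_sqrt)
  interpret gap_window t w "nat (\<lceil>u - w\<rceil> - 1)" "nat (\<lfloor>u + w\<rfloor> + 1)"
    using assms w by (intro gap_window_floor_ceiling[of w "v powr (1/3)"]) (auto simp: w_def)
  have "{m. 1 \<le> m \<and> v powr (1/2) < \<bar>real m - u\<bar>} = {1..nat (\<lceil>u - w\<rceil> - 1)} \<union> {nat (\<lfloor>u + w\<rfloor> + 1)..}"
    unfolding w(1) using assms by (intro far_points_eq_Un) (auto simp: w_def)
  then show ?thesis
    using has_sum_r2_kernel by simp
qed

theorem lemma3p3:
  shows "\<exists>C V0::real. \<forall>u v t :: real.
     V0 \<le> u \<and> V0 \<le> v \<and> v powr (9/10) \<le> u \<and> u \<le> 2 * v \<and>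
     t > 1 \<and> \<not> (\<exists>n::nat. t = real n \<and> r2 n > 0) \<and> \<bar>u - t\<bar> \<le> v powr (1/3)
     \<longrightarrow> (\<exists>s. ((\<lambda>m::nat. real (r2 m) * (1 / (real m - t) - real m / ((real m)^2 + 1)))
                 has_sum s) {m. m \<ge> 1 \<and> \<bar>real m - u\<bar> > v powr (1/2)}
              \<and> \<bar>s - (- pi * ln t)\<bar> \<le> C)"
proof -
  obtain V0 where V0: "\<And>v. V0 \<le> v \<Longrightarrow> 2 \<le> sqrt v \<and> 4 * v powr (1/3) \<le> sqrt v \<and> 4 * sqrt v \<le> v powr (9/10)"
    using eventually_parameter_bounds unfolding eventually_at_top_linorder by blast
  have far_sum: "\<exists>s. ((\<lambda>m::nat. real (r2 m) * (1 / (real m - t) - real m / ((real m)^2 + 1)))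
                 has_sum s) {m. m \<ge> 1 \<and> \<bar>real m - u\<bar> > v powr (1/2)}
              \<and> \<bar>s - (- pi * ln t)\<bar> \<le> 168 + 9 * pi"
    if "V0 \<le> v" "v powr (9/10) \<le> u" "u \<le> 2 * v" "\<bar>u - t\<bar> \<le> v powr (1/3)" for u v t
    using has_sum_r2_kernel_far_from[of v u t] V0[OF that(1)] that by (simp add: kernel_def)
  show ?thesis
    by (rule exI[of _ "168 + 9 * pi"], rule exI[of _ V0]) (blast intro: far_sum)
qed

end
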